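(* Let $n\ge 1$ be an integer. For every real $x$, $$J_0(x)+2\sum_{i=1}^{\infty}(-1)^iJ_{4in}(x)=\frac{1}{n}\sum_{\ell=0}^{n-1}\cos\Big(x\cos\frac{(1+4\ell)\pi}{4n}\Big),$$ i.e. $J_0(x)-2J_{4n}(x)+2J_{8n}(x)-\dots=\frac1n\sum_{\ell=0}^{n-1}\cos\big(x\cos\frac{1+4\ell}{4n}\pi\big)$, the series converging absolutely.
   Context: $J_p$ denotes the Bessel function of the first kind of integer order $p$, $J_p(x)=\sum_{k\ge0}(-1)^k\frac{(x/2)^{p+2k}}{k!\,(k+p)!}$ for $p\ge 0$. *)

theory Defs
  imports "HOL-Analysis.Analysis"
begin

definition besselJ :: "nat \<Rightarrow> real \<Rightarrow> real" where
  "besselJ p x = (\<Sum>k. (-1) ^ k * (x / 2) ^ (p + 2 * k) / (fact k * fact (k + p)))"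

end

theory Submission
  imports Defs
begin

text \<open>Writing \<open>\<epsilon>\<^sub>0 = 1\<close> and \<open>\<epsilon>\<^sub>i = 2\<close> for \<open>i > 0\<close>, the left-hand side is the
  absolutely convergent double series over \<open>(i, k)\<close> of
  \<open>\<epsilon>\<^sub>i (-1)\<^sup>i (-1)\<^sup>k (x/2)\<^bsup>4ni+2k\<^esup> / (k! (k+4ni)!)\<close>.
  Grouping it along \<open>m = k + 2ni\<close>, the terms with fixed \<open>m\<close> add up to
  \<open>(-1)\<^sup>m (x/2)\<^bsup>2m\<^esup> / (2m)!\<close> times \<open>\<Sum>\<^sub>i \<epsilon>\<^sub>i (-1)\<^sup>i C(2m, m+2ni)\<close>.
  Averaging the binomial expansion of \<open>(2 cos \<theta>)\<^bsup>2m\<^esup>\<close> over the angles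
  \<open>\<theta>\<^sub>l = (1+4l)\<pi>/(4n)\<close>, \<open>l < n\<close>, the sum over \<open>l\<close> acts as a root-of-unity filter and shows that
  this binomial sum is \<open>(1/n) \<Sum>\<^sub>l (2 cos \<theta>\<^sub>l)\<^bsup>2m\<^esup>\<close>. So the \<open>m\<close>-th group is the \<open>m\<close>-th term
  of the cosine series of \<open>(1/n) \<Sum>\<^sub>l cos (x cos \<theta>\<^sub>l)\<close>.\<close>

lemma two_cos_power_eq_sum_cis:
  "complex_of_real ((2 * cos t) ^ m) = (\<Sum>j\<le>m. of_nat (m choose j) * cis ((2 * real j - real m) * t))"
proof -
  have "complex_of_real ((2 * cos t) ^ m) = (cis t + cis (-t)) ^ m"
    by (simp add: complex_eq_iff flip: of_real_power)
  also have "\<dots> = (\<Sum>j\<le>m. of_nat (m choose j) * cis t ^ j * cis (-t) ^ (m - j))"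
    by (rule binomial_ring)
  also have "\<dots> = (\<Sum>j\<le>m. of_nat (m choose j) * cis ((2 * real j - real m) * t))"
  proof (rule sum.cong[OF refl])
    fix j assume "j \<in> {..m}"
    then have "cis t ^ j * cis (-t) ^ (m - j) = cis (real j * t + real (m - j) * (-t))"
      by (metis Complex.DeMoivre cis_mult)
    also have "real j * t + real (m - j) * (-t) = (2 * real j - real m) * t"
      using \<open>j \<in> {..m}\<close> by (simp add: of_nat_diff algebra_simps)
    finally show "of_nat (m choose j) * cis t ^ j * cis (-t) ^ (m - j)
        = of_nat (m choose j) * cis ((2 * real j - real m) * t)"
      by (simp add: mult.assoc)
  qed
  finally show ?thesis .
qed

lemma two_cos_power_eq_sum_cos:
  "(2 * cos t) ^ m = (\<Sum>j\<le>m. real (m choose j) * cos ((2 * real j - real m) * t))"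
  using arg_cong[OF two_cos_power_eq_sum_cis[of t m], of Re]
  by (simp only: Re_complex_of_real Re_sum) simp

lemma sum_roots_of_unity_power:
  fixes s :: int
  assumes "n \<ge> 1"
  shows "(\<Sum>l<n. cis (2 * pi * of_int s * real l / real n)) = (if int n dvd s then of_nat n else 0)"
proof -
  define z where "z = cis (2 * pi * of_int s / real n)"
  have powers: "cis (2 * pi * of_int s * real l / real n) = z ^ l" for l
  proof -
    have "z ^ l = cis (real l * (2 * pi * of_int s / real n))"
      unfolding z_def by (rule Complex.DeMoivre)
    then show ?thesis
      by (simp add: ac_simps)
  qed
  have "z ^ n = 1"
    using assms powers[of n] by simp
  moreover have "z = 1 \<longleftrightarrow> int n dvd s"
  proof -
    have "z = 1 \<longleftrightarrow> cos (2 * pi * of_int s / real n) = 1"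
      by (auto simp: z_def complex_eq_iff cos_one_sin_zero)
    also have "\<dots> \<longleftrightarrow> (\<exists>k::int. 2 * pi * of_int s / real n = of_int k * 2 * pi)"
      by (rule cos_one_2pi_int)
    also have "\<dots> \<longleftrightarrow> (\<exists>k::int. real_of_int s = real_of_int (int n * k))"
      using assms by (simp add: field_simps)
    also have "\<dots> \<longleftrightarrow> int n dvd s"
      unfolding of_int_eq_iff dvd_def ..
    finally show ?thesis .
  qed
  ultimately show ?thesis
    by (simp add: powers sum_gp_strict)
qed

lemma sum_cos_shifted_roots_of_unity:
  fixes s :: int
  assumes "n \<ge> 1"
  shows "(\<Sum>l<n. cos (a + 2 * pi * of_int s * real l / real n)) = (if int n dvd s then real n * cos a else 0)"
proof -
  have "(\<Sum>l<n. cos (a + 2 * pi * of_int s * real l / real n))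
      = Re (cis a * (\<Sum>l<n. cis (2 * pi * of_int s * real l / real n)))"
    by (simp add: sum_distrib_left cis_mult Re_sum)
  then show ?thesis
    by (simp add: sum_roots_of_unity_power[OF assms])
qed

lemma cos_nat_mult_half_pi:
  "cos (real t * pi / 2) = (if even t then (-1) ^ (t div 2) else 0)"
proof (cases "even t")
  case True
  then obtain u where "t = 2 * u" by blast
  then show ?thesis
    using cos_npi_int[of "int u"] by (simp add: ac_simps)
next
  case False
  then show ?thesis
    using cos_zero_iff_int[of "real t * pi / 2"] by (auto intro: exI[of _ "int t"] simp: even_of_nat)
qed

lemma cos_quarter_multiple_weight:
  fixes n s :: nat
  assumes "n \<ge> 1"
  shows "(if n dvd s then cos (real s * pi / (2 * real n)) else 0)
       = (if 2 * n dvd s then (-1) ^ (s div (2 * n)) else 0)"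
proof (cases "n dvd s")
  case True
  then obtain t where s: "s = n * t" by blast
  have "cos (real s * pi / (2 * real n)) = cos (real t * pi / 2)"
    using assms by (simp add: s)
  moreover have "2 * n dvd s \<longleftrightarrow> even t" and "s div (2 * n) = t div 2"
    using assms by (auto simp: s mult.commute[of 2])
  ultimately show ?thesis
    using True by (simp add: cos_nat_mult_half_pi)
next
  case False
  then show ?thesis
    by (auto dest: dvd_mult_right)
qed

definition neumann_factor :: "nat \<Rightarrow> real" where
  "neumann_factor i = (if i = 0 then 1 else 2)"

lemma sum_neumann_factor:
  "(\<Sum>i\<le>m. neumann_factor i * f i) = f 0 + 2 * (\<Sum>i=1..m. f i)"
proof -
  have "(\<Sum>i\<le>m. neumann_factor i * f i) = (\<Sum>i=0..m. neumann_factor i * f i)"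
    by (simp add: atMost_atLeast0)
  also have "\<dots> = f 0 + (\<Sum>i=1..m. 2 * f i)"
    by (subst sum.atLeast_Suc_atMost) (auto simp: neumann_factor_def intro!: sum.cong)
  finally show ?thesis
    by (simp add: sum_distrib_left)
qed

lemma sum_binomial_even_weight:
  fixes w :: "int \<Rightarrow> real"
  assumes even_w: "\<And>s. w (- s) = w s"
  shows "(\<Sum>j\<le>2*m. real (2*m choose j) * w (int j - int m))
       = (\<Sum>s\<le>m. neumann_factor s * (real (2*m choose (m + s)) * w (int s)))"
proof -
  let ?f = "\<lambda>j. real (2*m choose j) * w (int j - int m)"
  let ?g = "\<lambda>s. real (2*m choose (m + s)) * w (int s)"
  have split: "{..2*m} = {..<m} \<union> {m..2*m}" by auto
  have "(\<Sum>j\<le>2*m. ?f j) = (\<Sum>j<m. ?f j) + (\<Sum>j=m..2*m. ?f j)"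
    unfolding split by (rule sum.union_disjoint) auto
  also have "(\<Sum>j<m. ?f j) = (\<Sum>s=1..m. ?f (m - s))"
    by (rule sum.reindex_bij_witness[of _ "\<lambda>j. m - j" "\<lambda>s. m - s"]) auto
  also have "\<dots> = (\<Sum>s=1..m. ?g s)"
  proof (rule sum.cong[OF refl])
    fix s assume "s \<in> {1..m}"
    then have "2*m choose (m - s) = 2*m choose (m + s)" and "int (m - s) - int m = - int s"
      by (auto simp: binomial_symmetric[of "m - s" "2*m"] intro!: arg_cong[where f="(choose) (2*m)"])
    then show "?f (m - s) = ?g s"
      by (simp add: even_w)
  qed
  also have "(\<Sum>j=m..2*m. ?f j) = (\<Sum>s\<le>m. ?g s)"
    by (rule sum.reindex_bij_witness[of _ "\<lambda>s. m + s" "\<lambda>j. j - m"]) auto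
  finally have "(\<Sum>j\<le>2*m. ?f j) = (\<Sum>s=1..m. ?g s) + (\<Sum>s\<le>m. ?g s)" .
  moreover have "(\<Sum>s\<le>m. ?g s) = ?g 0 + (\<Sum>s=1..m. ?g s)"
    by (simp add: atMost_atLeast0 sum.atLeast_Suc_atMost)
  ultimately show ?thesis
    by (simp add: sum_neumann_factor)
qed

lemma sum_atMost_multiples:
  fixes d m :: nat
  assumes "d > 0"
  shows "(\<Sum>s\<le>m. if d dvd s then f (s div d) else 0) = (\<Sum>i\<le>m div d. f i)"
proof -
  have "(\<Sum>s\<le>m. if d dvd s then f (s div d) else 0) = (\<Sum>s\<in>{s\<in>{..m}. d dvd s}. f (s div d))"
    by (rule sum.inter_filter[OF finite_atMost, symmetric])
  also have "\<dots> = (\<Sum>i\<le>m div d. f i)"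
    using assms
    by (intro sum.reindex_bij_witness[of _ "\<lambda>i. d * i" "\<lambda>s. s div d"])
       (auto simp: less_eq_div_iff_mult_less_eq mult.commute)
  finally show ?thesis .
qed

lemma sum_two_cos_power_quarter_angles:
  assumes "n \<ge> 1"
  shows "(\<Sum>l<n. (2 * cos ((1 + 4 * real l) * pi / (4 * real n))) ^ (2 * m))
       = real n * (\<Sum>i\<le>m div (2 * n). neumann_factor i * ((-1) ^ i * real (2 * m choose (m + 2 * n * i))))"
proof -
  define \<theta> where "\<theta> l = (1 + 4 * real l) * pi / (4 * real n)" for l
  define w where "w s = (if int n dvd s then cos (of_int s * pi / (2 * real n)) else 0)" for s
  define h where "h i = neumann_factor i * ((-1) ^ i * real (2 * m choose (m + 2 * n * i)))" for i
  \<comment> \<open>With \<open>s = j - m\<close>, the angle \<open>2s\<theta>\<^sub>l\<close> is \<open>s\<pi>/(2n)\<close> plus \<open>l\<close> times \<open>2\<pi>s/n\<close>: summing over \<open>l\<close> keeps only \<open>n | s\<close>.\<close>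
  have angle: "(2 * real j - real (2 * m)) * \<theta> l
      = of_int (int j - int m) * pi / (2 * real n) + 2 * pi * of_int (int j - int m) * real l / real n"
    for j l
    using assms by (simp add: \<theta>_def field_simps)
  have inner: "(\<Sum>l<n. cos ((2 * real j - real (2 * m)) * \<theta> l)) = real n * w (int j - int m)" for j
    unfolding angle sum_cos_shifted_roots_of_unity[OF assms] w_def by simp
  have "(\<Sum>l<n. (2 * cos (\<theta> l)) ^ (2 * m))
      = (\<Sum>j\<le>2 * m. real (2 * m choose j) * (\<Sum>l<n. cos ((2 * real j - real (2 * m)) * \<theta> l)))"
    unfolding two_cos_power_eq_sum_cos by (simp add: sum_distrib_left sum.swap[of _ "{..<n}"])
  also have "\<dots> = (\<Sum>j\<le>2 * m. real (2 * m choose j) * (real n * w (int j - int m)))"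
    by (simp only: inner)
  also have "\<dots> = real n * (\<Sum>j\<le>2 * m. real (2 * m choose j) * w (int j - int m))"
    by (simp add: sum_distrib_left ac_simps)
  also have "(\<Sum>j\<le>2 * m. real (2 * m choose j) * w (int j - int m))
      = (\<Sum>s\<le>m. neumann_factor s * (real (2 * m choose (m + s)) * w (int s)))"
    by (rule sum_binomial_even_weight) (simp add: w_def)
  also have "\<dots> = (\<Sum>s\<le>m. if 2 * n dvd s then h (s div (2 * n)) else 0)"
  proof (intro sum.cong refl)
    fix s
    show "neumann_factor s * (real (2 * m choose (m + s)) * w (int s))
        = (if 2 * n dvd s then h (s div (2 * n)) else 0)"
      using assms cos_quarter_multiple_weight[OF assms, of s]
      by (auto simp: w_def h_def neumann_factor_def elim!: dvdE)
  qed
  also have "\<dots> = (\<Sum>i\<le>m div (2 * n). h i)"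
    using assms by (intro sum_atMost_multiples) simp
  finally show ?thesis
    by (simp add: \<theta>_def h_def)
qed

lemma summable_exp_series: "summable (\<lambda>k. c ^ k / fact k :: real)"
  using summable_exp[of c] by (simp add: divide_inverse_commute)

lemma exp_series_abs_summable_on: "(\<lambda>k. norm (c ^ k / fact k :: real)) summable_on UNIV"
  using summable_exp_series[of "\<bar>c\<bar>"] by (simp add: summable_on_UNIV_nonneg_real_iff power_abs)

lemma abs_summable_on_mult_Times:
  fixes f :: "'a \<Rightarrow> 'c::real_normed_div_algebra"
  assumes "(\<lambda>a. norm (f a)) summable_on A" and "(\<lambda>b. norm (g b)) summable_on B"
  shows "(\<lambda>(a, b). norm (f a * g b)) summable_on A \<times> B"
proof (rule summable_on_SigmaI[where g = "\<lambda>a. norm (f a) * infsum (\<lambda>b. norm (g b)) B"])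
  show "((\<lambda>b. (\<lambda>(a, b). norm (f a * g b)) (a, b)) has_sum norm (f a) * infsum (\<lambda>b. norm (g b)) B) B" for a
    using has_sum_cmult_right[OF has_sum_infsum[OF assms(2)], of "norm (f a)"] by (simp add: norm_mult)
  show "(\<lambda>a. norm (f a) * infsum (\<lambda>b. norm (g b)) B) summable_on A"
    using assms(1) by (rule summable_on_cmult_left)
qed auto

lemma sums_diagonal_regroup:
  fixes f :: "nat \<times> nat \<Rightarrow> 'a::banach"
  assumes "d > 0" and "f summable_on UNIV"
  shows "(\<lambda>m. \<Sum>i\<le>m div d. f (i, m - d * i)) sums infsum f UNIV"
proof -
  let ?D = "Sigma UNIV (\<lambda>m. {..m div d})"
  have le_iff: "i \<le> m div d \<longleftrightarrow> d * i \<le> m" for i m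
    using assms(1) by (simp add: less_eq_div_iff_mult_less_eq mult.commute)
  have "bij_betw (\<lambda>(m, i). (i, m - d * i)) ?D UNIV"
    by (rule bij_betw_byWitness[where f' = "\<lambda>(i, k). (d * i + k, i)"]) (auto simp: le_iff)
  then have "((\<lambda>(m, i). f (i, m - d * i)) has_sum infsum f UNIV) ?D"
    using has_sum_reindex_bij_betw[of _ ?D UNIV f] assms(2)
    by (simp add: case_prod_unfold has_sum_infsum)
  then have "((\<lambda>m. \<Sum>i\<le>m div d. f (i, m - d * i)) has_sum infsum f UNIV) UNIV"
    by (rule has_sum_SigmaD) (simp add: has_sum_finite)
  then show ?thesis
    by (rule has_sum_imp_sums)
qed

lemma has_sum_real_split_first:
  fixes a :: "nat \<Rightarrow> real"
  assumes "(a has_sum S) UNIV"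
  shows "summable (\<lambda>i. \<bar>a (Suc i)\<bar>)" and "a 0 + (\<Sum>i. a (Suc i)) = S"
proof -
  have "(\<lambda>i. norm (a i)) summable_on UNIV"
    using assms summable_on_iff_abs_summable_on_real by (auto simp: summable_on_def)
  then have "summable (\<lambda>i. \<bar>a i\<bar>)"
    by (simp add: summable_on_UNIV_nonneg_real_iff)
  then show "summable (\<lambda>i. \<bar>a (Suc i)\<bar>)"
    by (subst summable_Suc_iff)
  have "a sums S"
    using assms by (rule has_sum_imp_sums)
  then have "(\<lambda>i. a (Suc i)) sums (S - a 0)"
    using sums_Suc_iff[of a "S - a 0"] by simp
  then show "a 0 + (\<Sum>i. a (Suc i)) = S"
    by (simp add: sums_iff)
qed

definition besselJ_term :: "nat \<Rightarrow> real \<Rightarrow> nat \<Rightarrow> real" where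
  "besselJ_term p x k = (-1) ^ k * (x / 2) ^ (p + 2 * k) / (fact k * fact (k + p))"

lemma norm_besselJ_term_le:
  assumes "q \<le> k + p"
  shows "norm (besselJ_term p x k) \<le> \<bar>x / 2\<bar> ^ p / fact q * (((x / 2)^2) ^ k / fact k)"
proof -
  have "fact q \<le> (fact (k + p) :: real)"
    using assms by (rule fact_mono)
  have "norm (besselJ_term p x k) = \<bar>x / 2\<bar> ^ p * ((x / 2)^2) ^ k / (fact k * fact (k + p))"
    by (simp add: besselJ_term_def abs_mult power_add power_mult power_abs power_divide)
  also have "\<dots> \<le> \<bar>x / 2\<bar> ^ p * ((x / 2)^2) ^ k / (fact k * fact q)"
    using \<open>fact q \<le> fact (k + p)\<close> by (intro divide_left_mono mult_left_mono) auto
  finally show ?thesis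
    by (simp add: mult.commute)
qed

lemma besselJ_has_sum: "(besselJ_term p x has_sum besselJ p x) UNIV"
proof -
  have norm_summable: "summable (\<lambda>k. norm (besselJ_term p x k))"
  proof (rule summable_comparison_test')
    show "summable (\<lambda>k. \<bar>x / 2\<bar> ^ p / fact 0 * (((x / 2)^2) ^ k / fact k))"
      by (intro summable_mult summable_exp_series)
    show "norm (norm (besselJ_term p x k)) \<le> \<bar>x / 2\<bar> ^ p / fact 0 * (((x / 2)^2) ^ k / fact k)" for k
      using norm_besselJ_term_le[of 0 k p x] by simp
  qed
  have "besselJ p x = (\<Sum>k. besselJ_term p x k)"
    by (simp add: besselJ_def besselJ_term_def)
  then have "besselJ_term p x sums besselJ p x"
    using summable_sums[OF summable_norm_cancel[OF norm_summable]] by simp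
  with norm_summable show ?thesis
    by (rule norm_summable_imp_has_sum)
qed

lemma bessel_double_series_summable:
  assumes "c \<ge> 1" and bounded: "\<And>i. \<bar>a i\<bar> \<le> B"
  shows "(\<lambda>(i, k). a i * besselJ_term (c * i) x k) summable_on UNIV"
proof -
  define y where "y = \<bar>x / 2\<bar> ^ c"
  define z where "z = (x / 2)^2"
  let ?g = "\<lambda>(i, k). B * norm (y ^ i / fact i * (z ^ k / fact k))"
  have product: "(\<lambda>(i, k). norm (y ^ i / fact i * (z ^ k / fact k))) summable_on UNIV \<times> UNIV"
    by (intro abs_summable_on_mult_Times exp_series_abs_summable_on)
  then have g_summable: "?g summable_on UNIV"
    using summable_on_cmult_right[OF product, of B] by (simp add: case_prod_unfold)
  have bound: "norm (a i * besselJ_term (c * i) x k) \<le> ?g (i, k)" for i k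
  proof -
    have "i \<le> k + c * i"
      using assms(1) by (simp add: trans_le_add2)
    then have "norm (besselJ_term (c * i) x k) \<le> y ^ i / fact i * (z ^ k / fact k)"
      using norm_besselJ_term_le[of i k "c * i" x] by (simp add: y_def z_def power_mult)
    then have "norm (a i * besselJ_term (c * i) x k) \<le> B * (y ^ i / fact i * (z ^ k / fact k))"
      unfolding norm_mult using bounded[of i] by (intro mult_mono') auto
    also have "\<dots> = ?g (i, k)"
      by (simp add: y_def z_def)
    finally show ?thesis .
  qed
  have "(\<lambda>z. norm ((\<lambda>(i, k). a i * besselJ_term (c * i) x k) z)) summable_on UNIV"
  proof (rule Infinite_Sum.abs_summable_on_comparison_test'[OF g_summable])
    fix p :: "nat \<times> nat"
    show "norm ((\<lambda>(i, k). a i * besselJ_term (c * i) x k) p) \<le> ?g p"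
      using bound by (cases p) (simp only: case_prod_conv)
  qed
  then show ?thesis
    by (rule abs_summable_summable)
qed

lemma besselJ_term_diagonal:
  assumes "d * i \<le> m"
  shows "besselJ_term (2 * d * i) x (m - d * i)
       = (-1) ^ (d * i) * real (2 * m choose (m + d * i)) * ((-1) ^ m * (x / 2) ^ (2 * m) / fact (2 * m))"
proof -
  have exponent: "2 * d * i + 2 * (m - d * i) = 2 * m" and index: "m - d * i + 2 * d * i = m + d * i"
    using assms by auto
  have sign: "(-1 :: real) ^ (m - d * i) = (-1) ^ m * (-1) ^ (d * i)"
    using assms by (auto simp: minus_one_power_iff even_diff_nat)
  have "real (2 * m choose (m + d * i)) = fact (2 * m) / (fact (m + d * i) * fact (m - d * i))"
    using assms binomial_fact[of "m + d * i" "2 * m"] by (simp add: mult_2)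
  then show ?thesis
    unfolding besselJ_term_def exponent index sign by (simp add: field_simps)
qed

lemma sum_neumann_besselJ_terms_diagonal:
  assumes "n \<ge> 1"
  shows "(\<Sum>i\<le>m div (2 * n). neumann_factor i * (-1) ^ i * besselJ_term (4 * n * i) x (m - 2 * n * i))
       = 1 / real n * (\<Sum>l<n. (-1) ^ m / fact (2 * m) * (x * cos ((1 + 4 * real l) * pi / (4 * real n))) ^ (2 * m))"
proof -
  define K where "K = (-1) ^ m * (x / 2) ^ (2 * m) / fact (2 * m)"
  have summand: "neumann_factor i * (-1) ^ i * besselJ_term (4 * n * i) x (m - 2 * n * i)
      = K * (neumann_factor i * ((-1) ^ i * real (2 * m choose (m + 2 * n * i))))"
    if "i \<in> {..m div (2 * n)}" for i
  proof -
    have "2 * n * i \<le> m"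
      using that assms by (simp add: less_eq_div_iff_mult_less_eq mult.commute)
    then show ?thesis
      using besselJ_term_diagonal[of "2 * n" i m x] by (simp add: K_def power_mult mult.assoc)
  qed
  have "(\<Sum>i\<le>m div (2 * n). neumann_factor i * (-1) ^ i * besselJ_term (4 * n * i) x (m - 2 * n * i))
      = K * (\<Sum>i\<le>m div (2 * n). neumann_factor i * ((-1) ^ i * real (2 * m choose (m + 2 * n * i))))"
    by (simp add: summand sum_distrib_left)
  also have "\<dots> = K / real n * (\<Sum>l<n. (2 * cos ((1 + 4 * real l) * pi / (4 * real n))) ^ (2 * m))"
    unfolding sum_two_cos_power_quarter_angles[OF assms] using assms by simp
  also have "\<dots> = 1 / real n * (\<Sum>l<n. (-1) ^ m / fact (2 * m) * (x * cos ((1 + 4 * real l) * pi / (4 * real n))) ^ (2 * m))"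
    by (simp add: K_def sum_distrib_left power_mult_distrib power_divide field_simps)
  finally show ?thesis .
qed

lemma neumann_besselJ_series_has_sum:
  assumes "n \<ge> 1"
  shows "((\<lambda>i. neumann_factor i * (-1) ^ i * besselJ (4 * n * i) x)
          has_sum (1 / real n * (\<Sum>l<n. cos (x * cos ((1 + 4 * real l) * pi / (4 * real n)))))) UNIV"
proof -
  define F where "F = (\<lambda>(i, k). neumann_factor i * (-1) ^ i * besselJ_term (4 * n * i) x k)"
  have "F summable_on UNIV"
    unfolding F_def using assms
    by (intro bessel_double_series_summable[where B = 2]) (auto simp: neumann_factor_def abs_mult)
  then have "(F has_sum infsum F UNIV) (Sigma UNIV (\<lambda>_. UNIV))"
    by (simp add: has_sum_infsum)
  then have rows: "((\<lambda>i. neumann_factor i * (-1) ^ i * besselJ (4 * n * i) x) has_sum infsum F UNIV) UNIV"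
    by (rule has_sum_SigmaD) (simp add: F_def has_sum_cmult_right besselJ_has_sum)
  define c where "c m = 1 / real n * (\<Sum>l<n. (-1) ^ m / fact (2 * m) * (x * cos ((1 + 4 * real l) * pi / (4 * real n))) ^ (2 * m))" for m
  have "(\<lambda>m. \<Sum>i\<le>m div (2 * n). F (i, m - 2 * n * i)) sums infsum F UNIV"
    using assms \<open>F summable_on UNIV\<close> by (intro sums_diagonal_regroup) auto
  then have "c sums infsum F UNIV"
    using assms by (simp add: F_def c_def[abs_def] sum_neumann_besselJ_terms_diagonal)
  moreover have "c sums (1 / real n * (\<Sum>l<n. cos (x * cos ((1 + 4 * real l) * pi / (4 * real n)))))"
    unfolding c_def[abs_def] by (intro sums_mult sums_sum cos_paired)
  ultimately have "infsum F UNIV = 1 / real n * (\<Sum>l<n. cos (x * cos ((1 + 4 * real l) * pi / (4 * real n))))"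
    by (rule sums_unique2)
  with rows show ?thesis
    by simp
qed

theorem mainTheorem11:
  fixes n :: nat and x :: real
  assumes "n \<ge> 1"
  shows "summable (\<lambda>i. \<bar>besselJ (4 * (Suc i) * n) x\<bar>)
    \<and> besselJ 0 x + 2 * (\<Sum>i. (-1) ^ (Suc i) * besselJ (4 * (Suc i) * n) x)
        = (1 / real n) * (\<Sum>l<n. cos (x * cos ((1 + 4 * real l) * pi / (4 * real n))))"
proof -
  define a where "a i = neumann_factor i * (-1) ^ i * besselJ (4 * n * i) x" for i
  have series: "(a has_sum (1 / real n * (\<Sum>l<n. cos (x * cos ((1 + 4 * real l) * pi / (4 * real n)))))) UNIV"
    unfolding a_def using assms by (rule neumann_besselJ_series_has_sum)
  have a_Suc: "a (Suc i) = 2 * ((-1) ^ Suc i * besselJ (4 * Suc i * n) x)" for i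
    by (simp add: a_def neumann_factor_def ac_simps)
  have abs_summable: "summable (\<lambda>i. \<bar>besselJ (4 * Suc i * n) x\<bar>)"
    using has_sum_real_split_first(1)[OF series] by (simp add: a_Suc abs_mult)
  have "summable (\<lambda>i. (-1) ^ Suc i * besselJ (4 * Suc i * n) x)"
    by (rule summable_rabs_cancel) (use abs_summable in \<open>simp add: abs_mult\<close>)
  then have "(\<Sum>i. a (Suc i)) = 2 * (\<Sum>i. (-1) ^ Suc i * besselJ (4 * Suc i * n) x)"
    unfolding a_Suc by (rule suminf_mult)
  moreover have "a 0 = besselJ 0 x"
    by (simp add: a_def neumann_factor_def)
  ultimately show ?thesis
    using abs_summable has_sum_real_split_first(2)[OF series] by simp
qed

end
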